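(* For Global SEMO (standard mutation, fitness $f=(Cost,LP)$) on the weighted vertex cover problem, the search point $0^n$ is included in the population in expected time $O\big(OPT\cdot n(\log W_{max}+\log n)\big)$.
   Context: Weighted vertex cover: $G=(V,E)$, $V=\{v_1,\dots,v_n\}$, $w:V\to\mathbb{N}^+$, $W_{max}=\max_v w(v)$; $OPT$ is the minimum weight of a vertex cover. Search points $x\in\{0,1\}^n$; $Cost(x)=\sum_i w(v_i)x_i$; $G(x)$ is $G$ with selected vertices and edges having a selected endpoint removed; $LP(x)$ is the optimal value of: minimize $\sum_{v_i\in V(x)}w(v_i)y_i$ s.t. $y_i+y_j\ge1$ for edges $\{v_i,v_j\}$ of $G(x)$, $0\le y_i\le1$. $f(x)\le f(y)$ means componentwise $\le$. Global SEMO: start with a uniformly random $x$, $P=\{x\}$; each iteration choose $x\in P$ uniformly at random, create $x'$ by flipping each bit independently with probability $1/n$; if no $y\in P$ has $f(y)\le f(x')$, add $x'$ to $P$ and delete all other $z\in P$ with $f(x')\le f(z)$. Time = number of iterations. *)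

theory Defs
  imports "HOL-Probability.Probability"
begin

text \<open>Weighted vertex cover instances. Vertices are 0..n-1 (vertex v_{i+1} is index i),
  edges are 2-element subsets of {0..<n}, weights are positive naturals.\<close>

definition wvc_instance :: "nat \<Rightarrow> nat set set \<Rightarrow> (nat \<Rightarrow> nat) \<Rightarrow> bool" where
  "wvc_instance n E w \<longleftrightarrow>
     (\<forall>e\<in>E. e \<subseteq> {0..<n} \<and> card e = 2) \<and> (\<forall>i<n. 0 < w i)"

definition is_vertex_cover :: "nat \<Rightarrow> nat set set \<Rightarrow> nat set \<Rightarrow> bool" where
  "is_vertex_cover n E C \<longleftrightarrow> C \<subseteq> {0..<n} \<and> (\<forall>e\<in>E. e \<inter> C \<noteq> {})"

definition OPT :: "nat \<Rightarrow> nat set set \<Rightarrow> (nat \<Rightarrow> nat) \<Rightarrow> nat" where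
  "OPT n E w = Min {sum w C | C. is_vertex_cover n E C}"

definition Wmax :: "nat \<Rightarrow> (nat \<Rightarrow> nat) \<Rightarrow> nat" where
  "Wmax n w = Max (w ` {0..<n})"

text \<open>Search points are bit strings of length n; bit i selects vertex i.\<close>

definition Cost :: "nat \<Rightarrow> (nat \<Rightarrow> nat) \<Rightarrow> bool list \<Rightarrow> real" where
  "Cost n w x = (\<Sum>i<n. real (w i) * (if x ! i then 1 else 0))"

text \<open>Feasible fractional solutions of the LP relaxation on G(x): variables y_i for the
  unselected vertices, one covering constraint per edge with no selected endpoint.\<close>

definition LP_feasible :: "nat \<Rightarrow> nat set set \<Rightarrow> bool list \<Rightarrow> (nat \<Rightarrow> real) \<Rightarrow> bool" where
  "LP_feasible n E x y \<longleftrightarrow>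
     (\<forall>i<n. \<not> x ! i \<longrightarrow> 0 \<le> y i \<and> y i \<le> 1) \<and>
     (\<forall>i j. {i, j} \<in> E \<and> \<not> x ! i \<and> \<not> x ! j \<longrightarrow> y i + y j \<ge> 1)"

definition LP :: "nat \<Rightarrow> nat set set \<Rightarrow> (nat \<Rightarrow> nat) \<Rightarrow> bool list \<Rightarrow> real" where
  "LP n E w x = Inf {(\<Sum>i\<in>{i. i < n \<and> \<not> x ! i}. real (w i) * y i) | y. LP_feasible n E x y}"

definition fit :: "nat \<Rightarrow> nat set set \<Rightarrow> (nat \<Rightarrow> nat) \<Rightarrow> bool list \<Rightarrow> real \<times> real" where
  "fit n E w x = (Cost n w x, LP n E w x)"

definition fle :: "real \<times> real \<Rightarrow> real \<times> real \<Rightarrow> bool" where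
  "fle a b \<longleftrightarrow> fst a \<le> fst b \<and> snd a \<le> snd b"

fun mutate :: "real \<Rightarrow> bool list \<Rightarrow> bool list pmf" where
  "mutate p [] = return_pmf []"
| "mutate p (b # bs) =
     bind_pmf (bernoulli_pmf p) (\<lambda>c. map_pmf (\<lambda>r. (if c then \<not> b else b) # r) (mutate p bs))"

definition init_pmf :: "nat \<Rightarrow> bool list pmf" where
  "init_pmf n = pmf_of_set {x. length x = n}"

definition semo_step :: "nat \<Rightarrow> nat set set \<Rightarrow> (nat \<Rightarrow> nat) \<Rightarrow> bool list set \<Rightarrow> bool list set pmf" where
  "semo_step n E w P =
     bind_pmf (pmf_of_set P) (\<lambda>x.
     map_pmf (\<lambda>x'. if (\<exists>y\<in>P. fle (fit n E w y) (fit n E w x')) then P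
                   else insert x' {z \<in> P. \<not> fle (fit n E w x') (fit n E w z)})
       (mutate (1 / real n) x))"

text \<open>Process stopped once 0^n is in the population (does not change the hitting time).\<close>

definition zeros :: "nat \<Rightarrow> bool list" where
  "zeros n = replicate n False"

definition stopped_step :: "nat \<Rightarrow> nat set set \<Rightarrow> (nat \<Rightarrow> nat) \<Rightarrow> bool list set \<Rightarrow> bool list set pmf" where
  "stopped_step n E w P = (if zeros n \<in> P then return_pmf P else semo_step n E w P)"

fun semo_run :: "nat \<Rightarrow> nat set set \<Rightarrow> (nat \<Rightarrow> nat) \<Rightarrow> nat \<Rightarrow> bool list set pmf" where
  "semo_run n E w 0 = map_pmf (\<lambda>x. {x}) (init_pmf n)"
| "semo_run n E w (Suc t) = bind_pmf (semo_run n E w t) (stopped_step n E w)"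

text \<open>Expected hitting time T = min{t. 0^n \<in> P_t}, via E[T] = sum_t Pr[T > t].\<close>

definition expected_time_zeros :: "nat \<Rightarrow> nat set set \<Rightarrow> (nat \<Rightarrow> nat) \<Rightarrow> ennreal" where
  "expected_time_zeros n E w =
     (\<Sum>t. ennreal (measure_pmf.prob (semo_run n E w t) {P. zeros n \<notin> P}))"

end

theory Submission
  imports Defs
begin

text \<open>Let \<Phi> be the least weight of a selected vertex set in the population. A point can only
  be removed by one that weakly dominates it, hence costs no more, so \<Phi> never increases. With
  probability at least 1 / card P the algorithm mutates a member of weight \<Phi>, and with probability
  (1/n) (1 - 1/n)^(n-1) \<ge> 1 / (e n) it deselects exactly one given vertex i of it; the offspring
  is cheaper than every member, gets accepted, and \<Phi> drops by w i. Summing over the selected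
  vertices, \<Phi> shrinks in expectation by the factor 1 - 1 / (e n card P) per step.

  Members of the population are pairwise incomparable, so their LP values are distinct. The LP
  relaxation of vertex cover is half-integral, hence these values are half-integers in [0, OPT]
  and card P \<le> 2 OPT + 1. Starting from \<Phi> \<le> n W_max, multiplicative drift gives the expected
  time O(OPT n (ln W_max + ln n)) until \<Phi> = 0, i.e. until 0^n is in the population.\<close>

section \<open>Finite expectations and multiplicative drift\<close>

lemma nn_integral_measure_pmf_real_sum:
  assumes "finite L" "set_pmf M \<subseteq> L" "\<And>a. 0 \<le> f a"
  shows "(\<integral>\<^sup>+a. ennreal (f a) \<partial>measure_pmf M) = ennreal (\<Sum>a\<in>L. f a * pmf M a)"
proof -
  have "(\<integral>\<^sup>+a. ennreal (f a) \<partial>measure_pmf M) = (\<Sum>a\<in>L. ennreal (f a) * ennreal (pmf M a))"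
    using assms by (intro nn_integral_measure_pmf_support) auto
  also have "\<dots> = (\<Sum>a\<in>L. ennreal (f a * pmf M a))"
    using assms(3) by (intro sum.cong) (simp_all add: ennreal_mult)
  also have "\<dots> = ennreal (\<Sum>a\<in>L. f a * pmf M a)"
    using assms(3) by (intro sum_ennreal) simp
  finally show ?thesis .
qed

lemma sum_pmf_improvement_le:
  fixes h :: "'a \<Rightarrow> real" and r :: "'b \<Rightarrow> real"
  assumes L: "finite L" "set_pmf M \<subseteq> L" and g: "inj_on g S" "g ` S \<subseteq> L"
    and le: "\<And>a. a \<in> L \<Longrightarrow> h a \<le> c" and improve: "\<And>i. i \<in> S \<Longrightarrow> h (g i) \<le> c - r i"
  shows "(\<Sum>a\<in>L. h a * pmf M a) \<le> c - (\<Sum>i\<in>S. r i * pmf M (g i))"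
proof -
  have split: "(\<Sum>a\<in>L. f a) = (\<Sum>i\<in>S. f (g i)) + (\<Sum>a\<in>L - g ` S. f a)" for f :: "'a \<Rightarrow> real"
    using L g by (simp add: sum.subset_diff[of "g ` S" L] sum.reindex)
  have "(\<Sum>i\<in>S. h (g i) * pmf M (g i)) \<le> (\<Sum>i\<in>S. (c - r i) * pmf M (g i))"
    using improve by (intro sum_mono mult_right_mono) auto
  moreover have "(\<Sum>a\<in>L - g ` S. h a * pmf M a) \<le> (\<Sum>a\<in>L - g ` S. c * pmf M a)"
    using le by (intro sum_mono mult_right_mono) auto
  moreover have "(\<Sum>a\<in>L. c * pmf M a) = c"
    using sum_pmf_eq_1[OF L] by (simp add: sum_distrib_left[symmetric])
  ultimately show ?thesis
    using split[of "\<lambda>a. h a * pmf M a"] split[of "\<lambda>a. c * pmf M a"]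
    by (simp add: left_diff_distrib sum_subtractf)
qed

lemma nn_integral_pmf_of_set_improvement_le:
  assumes "finite P" "m \<in> P" "0 \<le> b" "b \<le> a"
    and "\<And>x. x \<in> P \<Longrightarrow> F x \<le> ennreal a" and "F m \<le> ennreal (a - b)"
  shows "(\<integral>\<^sup>+x. F x \<partial>measure_pmf (pmf_of_set P)) \<le> ennreal (a - b / real (card P))"
proof -
  have P: "P \<noteq> {}" "0 < card P" using assms(1,2) card_gt_0_iff by auto
  have "sum F P = F m + sum F (P - {m})" using assms(1,2) by (simp add: sum.remove)
  also have "\<dots> \<le> ennreal (a - b) + (\<Sum>x\<in>P - {m}. ennreal a)"
    using assms(5,6) by (intro add_mono sum_mono) auto
  also have "\<dots> = ennreal (a - b) + ennreal (real (card P - 1) * a)"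
    using assms(1,2,4) by (simp add: card_Diff_singleton ennreal_mult' ennreal_of_nat_eq_real_of_nat)
  also have "\<dots> = ennreal (a - b + real (card P - 1) * a)"
    using assms(3,4) by (intro ennreal_plus[symmetric]) auto
  also have "\<dots> = ennreal (real (card P) * a - b)"
    using P by (simp add: of_nat_diff algebra_simps)
  finally have "sum F P / of_nat (card P) \<le> ennreal (real (card P) * a - b) / of_nat (card P)"
    by (rule divide_right_mono_ennreal)
  also have "\<dots> = ennreal ((real (card P) * a - b) / real (card P))"
  proof -
    have "a \<le> real (card P) * a" using P assms(3,4) by (simp add: mult_le_cancel_right1 Suc_le_eq)
    then show ?thesis using P assms(4) by (simp add: divide_ennreal ennreal_of_nat_eq_real_of_nat)
  qed
  also have "\<dots> = ennreal (a - b / real (card P))" using P by (simp add: field_simps)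
  finally show ?thesis using P by (simp add: nn_integral_pmf_of_set[OF P(1) assms(1)])
qed

text \<open>The first T = \<lceil>ln A / \<delta>\<rceil> terms are bounded by 1, the remaining ones by
  the geometric series (1 - \<delta>) ^ (t - T), since (1 - \<delta>) ^ T * A \<le> 1.\<close>

lemma suminf_le_multiplicative_drift:
  fixes p :: "nat \<Rightarrow> real" and \<delta> A :: real
  assumes \<delta>: "0 < \<delta>" "\<delta> \<le> 1" and A: "1 \<le> A"
    and p: "\<And>t. p t \<le> 1" "\<And>t. p t \<le> (1 - \<delta>) ^ t * A"
  shows "(\<Sum>t. ennreal (p t)) \<le> ennreal ((ln A + 1) / \<delta> + 1)"
proof -
  define r where "r = 1 - \<delta>"
  have r: "0 \<le> r" "r < 1" using \<delta> unfolding r_def by auto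
  define T where "T = nat \<lceil>ln A / \<delta>\<rceil>"
  have lnA: "0 \<le> ln A / \<delta>" using A \<delta> by simp
  have T: "ln A / \<delta> \<le> real T" "real T \<le> ln A / \<delta> + 1"
    using lnA unfolding T_def by linarith+
  have "r ^ T \<le> exp (- \<delta>) ^ T"
    using exp_ge_add_one_self[of "- \<delta>"] r unfolding r_def by (intro power_mono) auto
  also have "\<dots> = exp (- (real T * \<delta>))" by (simp add: exp_of_nat_mult[symmetric])
  also have "\<dots> \<le> exp (- ln A)" using T(1) \<delta> by (simp add: divide_le_eq)
  also have "\<dots> = 1 / A" using A by (simp add: exp_minus inverse_eq_divide)
  finally have rTA: "r ^ T * A \<le> 1" using A by (simp add: le_divide_eq)
  define g where "g t = (if t < T then 1 else r ^ (t - T))" for t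
  have g: "p t \<le> g t" for t
  proof (cases "t < T")
    case False
    have "(1 - \<delta>) ^ t = r ^ (t - T) * r ^ T"
      using False unfolding r_def by (simp add: power_add[symmetric])
    then have "p t \<le> r ^ (t - T) * (r ^ T * A)" using p(2)[of t] by (simp add: mult.assoc)
    also have "\<dots> \<le> r ^ (t - T)" using rTA r by (simp add: mult_left_le)
    finally show ?thesis using False unfolding g_def by simp
  qed (simp add: g_def p(1))
  have shift: "(\<lambda>t. g (t + T)) = (\<lambda>t. r ^ t)" unfolding g_def by auto
  have sums: "summable g"
    using summable_geometric[of r] r shift summable_iff_shift[of g T] by simp
  have "suminf g = (\<Sum>t. g (t + T)) + (\<Sum>t<T. g t)" by (rule suminf_split_initial_segment[OF sums])
  also have "\<dots> = 1 / \<delta> + real T" using r unfolding shift r_def by (simp add: suminf_geometric g_def)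
  finally have "suminf g \<le> (ln A + 1) / \<delta> + 1" using T(2) by (simp add: add_divide_distrib)
  moreover have "(\<Sum>t. ennreal (p t)) \<le> (\<Sum>t. ennreal (g t))"
    using g by (intro suminf_le ennreal_leI) auto
  moreover have "(\<Sum>t. ennreal (g t)) = ennreal (suminf g)"
  proof (rule suminf_ennreal2[OF _ sums])
    show "0 \<le> g t" for t using r unfolding g_def by simp
  qed
  ultimately show ?thesis by (simp add: ennreal_leI order_trans)
qed

lemma wvc_instance_two_le:
  assumes "wvc_instance n E w" "E \<noteq> {}"
  shows "2 \<le> n"
proof -
  obtain e where "e \<in> E" using assms(2) by auto
  then have "e \<subseteq> {0..<n}" "card e = 2" using assms(1) unfolding wvc_instance_def by auto
  then show ?thesis by (metis card_atLeastLessThan card_mono diff_zero finite_atLeastLessThan)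
qed

lemma Wmax_pos:
  assumes "wvc_instance n E w" "0 < n"
  shows "0 < Wmax n w"
proof -
  have "w 0 \<le> Wmax n w" unfolding Wmax_def using assms(2) by (intro Max_ge) auto
  moreover have "0 < w 0" using assms unfolding wvc_instance_def by auto
  ultimately show ?thesis by linarith
qed

lemma finite_vertex_covers: "finite {C. is_vertex_cover n E C}"
  by (rule finite_subset[of _ "Pow {0..<n}"]) (auto simp: is_vertex_cover_def)

lemma OPT_attained:
  assumes "wvc_instance n E w"
  obtains C where "is_vertex_cover n E C" "sum w C = OPT n E w"
proof -
  have "is_vertex_cover n E {0..<n}"
    using assms unfolding is_vertex_cover_def wvc_instance_def
    by (metis Int_absorb2 card.empty zero_neq_numeral order_refl)
  moreover have "{sum w C | C. is_vertex_cover n E C} = sum w ` {C. is_vertex_cover n E C}" by auto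
  ultimately have "OPT n E w \<in> sum w ` {C. is_vertex_cover n E C}"
    unfolding OPT_def using finite_vertex_covers by (metis Min_in empty_iff finite_imageI image_eqI mem_Collect_eq)
  then show ?thesis using that by auto
qed

lemma OPT_pos:
  assumes inst: "wvc_instance n E w" and ne: "E \<noteq> {}"
  shows "0 < OPT n E w"
proof -
  obtain C where C: "is_vertex_cover n E C" "sum w C = OPT n E w" using OPT_attained[OF inst] .
  obtain e where "e \<in> E" using ne by auto
  then obtain i where i: "i \<in> C" using C(1) unfolding is_vertex_cover_def by auto
  have "finite C" "i < n" using C(1) i unfolding is_vertex_cover_def by (auto intro: finite_subset)
  then have "w i \<le> sum w C" using i by (simp add: member_le_sum)
  moreover have "0 < w i" using inst \<open>i < n\<close> unfolding wvc_instance_def by auto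
  ultimately show ?thesis using C(2) by linarith
qed

section \<open>Half-integrality of the LP relaxation\<close>

definition unselected :: "nat \<Rightarrow> bool list \<Rightarrow> nat set" where
  "unselected n x = {i. i < n \<and> \<not> x ! i}"

definition lp_value :: "nat \<Rightarrow> (nat \<Rightarrow> nat) \<Rightarrow> bool list \<Rightarrow> (nat \<Rightarrow> real) \<Rightarrow> real" where
  "lp_value n w x y = (\<Sum>i\<in>unselected n x. real (w i) * y i)"

definition non_half_integral :: "nat \<Rightarrow> bool list \<Rightarrow> (nat \<Rightarrow> real) \<Rightarrow> nat set" where
  "non_half_integral n x y = {i \<in> unselected n x. y i \<notin> {0, 1/2, 1}}"

lemma finite_unselected [simp]: "finite (unselected n x)"
  unfolding unselected_def by auto

lemma finite_non_half_integral [simp]: "finite (non_half_integral n x y)"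
  unfolding non_half_integral_def by auto

lemma LP_feasible_bounds:
  "LP_feasible n E x y \<Longrightarrow> i \<in> unselected n x \<Longrightarrow> 0 \<le> y i \<and> y i \<le> 1"
  unfolding LP_feasible_def unselected_def by auto

lemma LP_feasible_perturb:
  assumes edges: "\<forall>e\<in>E. e \<subseteq> {0..<n}" and feas: "LP_feasible n E x y"
    and fixed: "\<And>i. i \<notin> non_half_integral n x y \<Longrightarrow> y' i = y i"
    and low: "\<And>i. i \<in> non_half_integral n x y \<Longrightarrow> y i < 1/2 \<Longrightarrow> 0 \<le> y' i \<and> y' i \<le> 1/2"
    and high: "\<And>i. i \<in> non_half_integral n x y \<Longrightarrow> y i > 1/2 \<Longrightarrow> 1/2 \<le> y' i \<and> y' i \<le> 1"
    and balanced: "\<And>i j. i \<in> non_half_integral n x y \<Longrightarrow> j \<in> non_half_integral n x y \<Longrightarrow>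
                      y i < 1/2 \<Longrightarrow> y j > 1/2 \<Longrightarrow> y' i + y' j = y i + y j"
  shows "LP_feasible n E x y'"
proof -
  let ?B = "non_half_integral n x y" and ?U = "unselected n x"
  have in_B: "i \<in> ?B \<longleftrightarrow> i \<in> ?U \<and> y i \<noteq> 0 \<and> y i \<noteq> 1/2 \<and> y i \<noteq> 1" for i
    unfolding non_half_integral_def by auto
  have bounds: "0 \<le> y' i \<and> y' i \<le> 1" if "i \<in> ?U" for i
    using LP_feasible_bounds[OF feas that] fixed[of i] low[of i] high[of i] in_B[of i] that
    by (cases "y i < 1/2"; cases "y i > 1/2") auto
  have stays_high: "1/2 \<le> y' i" if "i \<in> ?U" "1/2 \<le> y i" for i
    using fixed[of i] high[of i] in_B[of i] that by (cases "i \<in> ?B") auto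
  have low_edge: "1 \<le> y' a + y' b"
    if "a \<in> ?U" "b \<in> ?U" "1 \<le> y a + y b" "y a < 1/2" for a b
  proof (cases "y b = 1")
    case True
    then show ?thesis using fixed[of b] in_B[of b] bounds[OF \<open>a \<in> ?U\<close>] by auto
  next
    case False
    have "y b \<le> 1" "0 \<le> y a" using LP_feasible_bounds[OF feas] that by auto
    then have "b \<in> ?B" "a \<in> ?B" "y b > 1/2" using False that in_B by auto
    then show ?thesis using balanced[of a b] that by linarith
  qed
  show ?thesis
    unfolding LP_feasible_def
  proof (intro conjI allI impI)
    fix i assume "i < n" "\<not> x ! i"
    then show "0 \<le> y' i" "y' i \<le> 1" using bounds unfolding unselected_def by auto
  next
    fix i j assume ij: "{i, j} \<in> E \<and> \<not> x ! i \<and> \<not> x ! j"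
    then have U: "i \<in> ?U" "j \<in> ?U" using edges unfolding unselected_def by auto
    have cover: "1 \<le> y i + y j" using feas ij unfolding LP_feasible_def by auto
    consider "y i < 1/2" | "y j < 1/2" | "1/2 \<le> y i" "1/2 \<le> y j" by linarith
    then show "1 \<le> y' i + y' j"
    proof cases
      case 1 then show ?thesis using low_edge U cover by blast
    next
      case 2 then show ?thesis using low_edge[of j i] U cover by simp
    next
      case 3 then show ?thesis using stays_high[of i] stays_high[of j] U by linarith
    qed
  qed
qed

lemma lp_value_perturb:
  "lp_value n w x (\<lambda>i. y i + c * d i) = lp_value n w x y + c * (\<Sum>i\<in>unselected n x. real (w i) * d i)"
  unfolding lp_value_def by (simp add: algebra_simps sum.distrib sum_distrib_left)

definition toward_half :: "nat \<Rightarrow> bool list \<Rightarrow> (nat \<Rightarrow> real) \<Rightarrow> nat \<Rightarrow> real" where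
  "toward_half n x y i = (if i \<in> non_half_integral n x y then if y i < 1/2 then 1 else -1 else 0)"

text \<open>Moving along \<plusminus>toward_half keeps the sum on every edge joining a coordinate below 1/2
  to one above 1/2, so the step may go on until the first coordinate reaches 0, 1/2 or 1.\<close>

lemma LP_feasible_line_search:
  assumes edges: "\<forall>e\<in>E. e \<subseteq> {0..<n}" and feas: "LP_feasible n E x y"
    and ne: "non_half_integral n x y \<noteq> {}" and s: "s = 1 \<or> s = -1"
  obtains \<epsilon> :: real where "0 < \<epsilon>"
    "LP_feasible n E x (\<lambda>i. y i + s * \<epsilon> * toward_half n x y i)"
    "non_half_integral n x (\<lambda>i. y i + s * \<epsilon> * toward_half n x y i) \<subset> non_half_integral n x y"
proof -
  define B where "B = non_half_integral n x y"
  define d where "d = toward_half n x y"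
  have in_B: "i \<in> B \<longleftrightarrow> i \<in> unselected n x \<and> y i \<noteq> 0 \<and> y i \<noteq> 1/2 \<and> y i \<noteq> 1" for i
    unfolding B_def non_half_integral_def by auto
  have bounds: "i \<in> B \<Longrightarrow> 0 < y i \<and> y i < 1" for i
    using LP_feasible_bounds[OF feas, of i] in_B[of i] by auto
  define gap where "gap i = (if s * d i > 0 then (if y i < 1/2 then 1/2 else 1) - y i
                             else y i - (if y i < 1/2 then 0 else 1/2))" for i
  define \<epsilon> where "\<epsilon> = Min (gap ` B)"
  define y' where "y' i = y i + s * \<epsilon> * d i" for i
  have finB: "finite B" and neB: "B \<noteq> {}" using ne unfolding B_def by auto
  have "gap i > 0" if "i \<in> B" for i
    using bounds[OF that] in_B[of i] that unfolding gap_def by auto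
  then have \<epsilon>_pos: "\<epsilon> > 0" unfolding \<epsilon>_def using finB neB by auto
  have \<epsilon>_le: "\<epsilon> \<le> gap i" if "i \<in> B" for i unfolding \<epsilon>_def using finB that by auto
  have "\<epsilon> \<in> gap ` B" unfolding \<epsilon>_def using finB neB by (intro Min_in) auto
  then obtain i0 where i0: "i0 \<in> B" "gap i0 = \<epsilon>" by auto
  have fixed: "y' i = y i" if "i \<notin> B" for i
    using that unfolding y'_def d_def toward_half_def B_def by auto
  have d_low: "d i = 1" and gap_low: "gap i = (if s = 1 then 1/2 - y i else y i)"
    if "i \<in> B" "y i < 1/2" for i
    using s that unfolding gap_def d_def toward_half_def B_def by auto
  have d_high: "d i = -1" and gap_high: "gap i = (if s = 1 then y i - 1/2 else 1 - y i)"
    if "i \<in> B" "\<not> y i < 1/2" for i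
    using s that unfolding gap_def d_def toward_half_def B_def by auto
  have low: "0 \<le> y' i \<and> y' i \<le> 1/2" if "i \<in> B" "y i < 1/2" for i
    using s \<epsilon>_pos \<epsilon>_le[OF that(1)] bounds[OF that(1)] that d_low[OF that] gap_low[OF that]
    unfolding y'_def by auto
  have high: "1/2 \<le> y' i \<and> y' i \<le> 1" if "i \<in> B" "y i > 1/2" for i
    using s \<epsilon>_pos \<epsilon>_le[OF that(1)] bounds[OF that(1)] that d_high[of i] gap_high[of i]
    unfolding y'_def by auto
  have balanced: "y' i + y' j = y i + y j" if "i \<in> B" "j \<in> B" "y i < 1/2" "y j > 1/2" for i j
    using that d_low[of i] d_high[of j] unfolding y'_def by auto
  have hit: "y' i0 \<in> {0, 1/2, 1}"
    using s i0 d_low[of i0] gap_low[of i0] d_high[of i0] gap_high[of i0]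
    unfolding y'_def by (cases "y i0 < 1/2") auto
  have "LP_feasible n E x y'"
    using LP_feasible_perturb[OF edges feas, of y'] fixed low high balanced unfolding B_def by blast
  moreover have "non_half_integral n x y' \<subset> B"
  proof -
    have "non_half_integral n x y' \<subseteq> B"
    proof
      fix i assume i: "i \<in> non_half_integral n x y'"
      show "i \<in> B"
      proof (rule ccontr)
        assume "i \<notin> B"
        then show False using i fixed[of i] unfolding B_def non_half_integral_def by auto
      qed
    qed
    moreover have "i0 \<notin> non_half_integral n x y'" using hit unfolding non_half_integral_def by auto
    ultimately show ?thesis using i0 by auto
  qed
  ultimately show ?thesis using that \<epsilon>_pos unfolding y'_def d_def B_def by blast
qed

text \<open>The objective is linear along the line, so one of the two directions does not increase it.\<close>

lemma LP_feasible_reduce_non_half_integral: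
  assumes edges: "\<forall>e\<in>E. e \<subseteq> {0..<n}" and feas: "LP_feasible n E x y"
    and ne: "non_half_integral n x y \<noteq> {}"
  obtains y' where "LP_feasible n E x y'" "lp_value n w x y' \<le> lp_value n w x y"
    "non_half_integral n x y' \<subset> non_half_integral n x y"
proof -
  define D where "D = (\<Sum>i\<in>unselected n x. real (w i) * toward_half n x y i)"
  define s :: real where "s = (if D \<le> 0 then 1 else -1)"
  then have "s = 1 \<or> s = -1" by simp
  then obtain \<epsilon> where \<epsilon>: "0 < \<epsilon>"
    "LP_feasible n E x (\<lambda>i. y i + s * \<epsilon> * toward_half n x y i)"
    "non_half_integral n x (\<lambda>i. y i + s * \<epsilon> * toward_half n x y i) \<subset> non_half_integral n x y"
    by (rule LP_feasible_line_search[OF edges feas ne])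
  have "\<epsilon> * (s * D) \<le> 0" using \<epsilon>(1) unfolding s_def by (simp add: mult_nonneg_nonpos)
  then have "lp_value n w x (\<lambda>i. y i + s * \<epsilon> * toward_half n x y i) \<le> lp_value n w x y"
    unfolding lp_value_perturb D_def[symmetric] by (simp add: ac_simps)
  then show ?thesis using that \<epsilon>(2,3) by blast
qed

lemma LP_feasible_half_integral:
  assumes edges: "\<forall>e\<in>E. e \<subseteq> {0..<n}" and feas: "LP_feasible n E x y"
  obtains y' where "LP_feasible n E x y'" "lp_value n w x y' \<le> lp_value n w x y"
    "non_half_integral n x y' = {}"
  using feas
proof (induction "card (non_half_integral n x y)" arbitrary: y thesis rule: less_induct)
  case less
  show ?case
  proof (cases "non_half_integral n x y = {}")
    case True then show ?thesis using less.prems by blast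
  next
    case False
    obtain y' where y': "LP_feasible n E x y'" "lp_value n w x y' \<le> lp_value n w x y"
      "non_half_integral n x y' \<subset> non_half_integral n x y"
      using LP_feasible_reduce_non_half_integral[OF edges less.prems(2) False] by blast
    have "card (non_half_integral n x y') < card (non_half_integral n x y)"
      using y'(3) by (simp add: psubset_card_mono)
    then show ?thesis using less.hyps[OF _ _ y'(1)] less.prems(1) y'(2) by fastforce
  qed
qed

lemma lp_value_half_integral:
  assumes "non_half_integral n x y = {}"
  obtains k :: nat where "lp_value n w x y = real k / 2"
proof -
  define c :: "nat \<Rightarrow> nat" where "c i = (if y i = 0 then 0 else if y i = 1/2 then 1 else 2)" for i
  have "y i = real (c i) / 2" if "i \<in> unselected n x" for i
    using assms that unfolding non_half_integral_def c_def by auto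
  then have "lp_value n w x y = (\<Sum>i\<in>unselected n x. real (w i) * (real (c i) / 2))"
    unfolding lp_value_def by (intro sum.cong) auto
  also have "\<dots> = real (\<Sum>i\<in>unselected n x. w i * c i) / 2"
    by (simp add: sum_divide_distrib)
  finally show ?thesis using that by blast
qed

lemma LP_eq_Inf_lp_value: "LP n E w x = Inf {lp_value n w x y | y. LP_feasible n E x y}"
  unfolding LP_def lp_value_def unselected_def by simp

lemma LP_half_integral:
  assumes edges: "\<forall>e\<in>E. e \<subseteq> {0..<n}"
  obtains k :: nat where "LP n E w x = real k / 2"
proof -
  define V where "V = {lp_value n w x y | y. LP_feasible n E x y}"
  define K where "K = {k :: nat. real k / 2 \<in> V}"
  have below: "\<exists>k\<in>K. real k / 2 \<le> v" if v: "v \<in> V" for v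
  proof -
    obtain y where y: "LP_feasible n E x y" "v = lp_value n w x y" using v unfolding V_def by blast
    obtain y' where y': "LP_feasible n E x y'" "lp_value n w x y' \<le> v" "non_half_integral n x y' = {}"
      using LP_feasible_half_integral[OF edges y(1)] y(2) by blast
    obtain k where k: "lp_value n w x y' = real k / 2" using lp_value_half_integral[OF y'(3)] by blast
    have "k \<in> K" unfolding K_def V_def using y'(1) k by force
    moreover have "real k / 2 \<le> v" using k y'(2) by simp
    ultimately show ?thesis by blast
  qed
  have "LP_feasible n E x (\<lambda>_. 1)" unfolding LP_feasible_def by auto
  then obtain k1 where "k1 \<in> K" using below unfolding V_def by blast
  define k0 where "k0 = (LEAST k. k \<in> K)"
  have k0: "k0 \<in> K" unfolding k0_def using \<open>k1 \<in> K\<close> by (rule LeastI)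
  have "Inf V = real k0 / 2"
  proof (rule cInf_eq_minimum)
    show "real k0 / 2 \<in> V" using k0 K_def by auto
  next
    fix v assume "v \<in> V"
    then obtain k where "k \<in> K" "real k / 2 \<le> v" using below by blast
    moreover have "k0 \<le> k" unfolding k0_def using \<open>k \<in> K\<close> by (rule Least_le)
    ultimately show "real k0 / 2 \<le> v" by linarith
  qed
  then show ?thesis using that unfolding LP_eq_Inf_lp_value V_def by blast
qed

lemma LP_le_OPT:
  assumes "wvc_instance n E w"
  shows "LP n E w x \<le> real (OPT n E w)"
proof -
  obtain C where C: "is_vertex_cover n E C" "sum w C = OPT n E w" using OPT_attained[OF assms] .
  define y :: "nat \<Rightarrow> real" where "y i = (if i \<in> C then 1 else 0)" for i
  have feas: "LP_feasible n E x y"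
    unfolding LP_feasible_def
  proof (intro conjI allI impI)
    fix i j assume "{i, j} \<in> E \<and> \<not> x ! i \<and> \<not> x ! j"
    then have "{i, j} \<inter> C \<noteq> {}" using C(1) unfolding is_vertex_cover_def by auto
    then show "1 \<le> y i + y j" unfolding y_def by auto
  qed (auto simp: y_def)
  have "finite C" using C(1) unfolding is_vertex_cover_def by (auto intro: finite_subset)
  have "LP n E w x \<le> lp_value n w x y"
    unfolding LP_eq_Inf_lp_value using feas
  proof (intro cInf_lower)
    show "bdd_below {lp_value n w x y | y. LP_feasible n E x y}"
      by (rule bdd_belowI[of _ 0]) (auto simp: lp_value_def LP_feasible_def unselected_def intro!: sum_nonneg)
  qed auto
  also have "\<dots> = (\<Sum>i\<in>unselected n x \<inter> C. real (w i))"
    unfolding lp_value_def y_def by (simp add: sum.inter_restrict if_distrib cong: if_cong)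
  also have "\<dots> \<le> (\<Sum>i\<in>C. real (w i))" using \<open>finite C\<close> by (intro sum_mono2) auto
  also have "\<dots> = real (OPT n E w)" using C(2) by (metis of_nat_sum)
  finally show ?thesis .
qed

section \<open>Populations of Global SEMO\<close>

definition selected_weight :: "nat \<Rightarrow> (nat \<Rightarrow> nat) \<Rightarrow> bool list \<Rightarrow> nat" where
  "selected_weight n w x = (\<Sum>i | i < n \<and> x ! i. w i)"

lemma Cost_eq_selected_weight: "Cost n w x = real (selected_weight n w x)"
proof -
  have "Cost n w x = (\<Sum>i<n. if x ! i then real (w i) else 0)"
    unfolding Cost_def by (intro sum.cong) auto
  also have "\<dots> = (\<Sum>i\<in>{i \<in> {..<n}. x ! i}. real (w i))"
    by (rule sum.inter_filter[symmetric]) simp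
  also have "{i \<in> {..<n}. x ! i} = {i. i < n \<and> x ! i}" by auto
  finally show ?thesis unfolding selected_weight_def by simp
qed

lemma fle_fit_selected_weight:
  "fle (fit n E w y) (fit n E w z) \<Longrightarrow> selected_weight n w y \<le> selected_weight n w z"
  unfolding fle_def fit_def by (simp add: Cost_eq_selected_weight)

lemma selected_weight_zeros [simp]: "selected_weight n w (zeros n) = 0"
  unfolding selected_weight_def zeros_def by (auto intro: sum.neutral)

lemma selected_weight_eq_0_iff:
  assumes "\<forall>i<n. 0 < w i" "length x = n"
  shows "selected_weight n w x = 0 \<longleftrightarrow> x = zeros n"
proof
  assume "selected_weight n w x = 0"
  then have "\<not> x ! i" if "i < n" for i
    using assms(1) that unfolding selected_weight_def by (auto simp: sum_eq_0_iff)
  then show "x = zeros n" using assms(2) by (intro nth_equalityI) (auto simp: zeros_def)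
qed simp

lemma selected_weight_le: "selected_weight n w x \<le> n * Wmax n w"
proof -
  have "selected_weight n w x \<le> (\<Sum>i<n. w i)"
    unfolding selected_weight_def by (intro sum_mono2) auto
  also have "\<dots> \<le> (\<Sum>i<n. Wmax n w)"
    by (intro sum_mono) (auto simp: Wmax_def intro!: Max_ge)
  finally show ?thesis by simp
qed

lemma selected_weight_deselect:
  assumes "length x = n" "i < n" "x ! i"
  shows "selected_weight n w (x[i := False]) + w i = selected_weight n w x"
proof -
  have "{k. k < n \<and> x[i := False] ! k} = {k. k < n \<and> x ! k} - {i}"
    using assms by (auto simp: nth_list_update)
  then show ?thesis unfolding selected_weight_def using assms by (simp add: sum.remove)
qed

definition semo_population :: "nat \<Rightarrow> nat set set \<Rightarrow> (nat \<Rightarrow> nat) \<Rightarrow> bool list set \<Rightarrow> bool" where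
  "semo_population n E w P \<longleftrightarrow> finite P \<and> P \<noteq> {} \<and> (\<forall>x\<in>P. length x = n) \<and>
     (\<forall>y\<in>P. \<forall>z\<in>P. y \<noteq> z \<longrightarrow> \<not> fle (fit n E w y) (fit n E w z))"

definition semo_update :: "nat \<Rightarrow> nat set set \<Rightarrow> (nat \<Rightarrow> nat) \<Rightarrow> bool list set \<Rightarrow> bool list \<Rightarrow> bool list set" where
  "semo_update n E w P x' =
     (if \<exists>y\<in>P. fle (fit n E w y) (fit n E w x') then P
      else insert x' {z \<in> P. \<not> fle (fit n E w x') (fit n E w z)})"

lemma semo_step_eq:
  "semo_step n E w P = bind_pmf (pmf_of_set P) (\<lambda>x. map_pmf (semo_update n E w P) (mutate (1 / real n) x))"
  unfolding semo_step_def semo_update_def ..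

lemma semo_populationD:
  assumes "semo_population n E w P"
  shows "finite P" "P \<noteq> {}" "x \<in> P \<Longrightarrow> length x = n"
    "y \<in> P \<Longrightarrow> z \<in> P \<Longrightarrow> y \<noteq> z \<Longrightarrow> \<not> fle (fit n E w y) (fit n E w z)"
  using assms unfolding semo_population_def by blast+

lemma semo_population_update:
  assumes P: "semo_population n E w P" and "length x' = n"
  shows "semo_population n E w (semo_update n E w P x')"
proof (cases "\<exists>y\<in>P. fle (fit n E w y) (fit n E w x')")
  case True then show ?thesis using P by (simp add: semo_update_def)
next
  case False
  then show ?thesis
    using semo_populationD[OF P] assms(2) unfolding semo_update_def semo_population_def
    by (auto simp: fle_def)
qed

text \<open>Members with equal LP values are comparable, and the LP values are half-integers
  in [0, OPT].\<close>

lemma card_semo_population_le: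
  assumes inst: "wvc_instance n E w" and P: "semo_population n E w P"
  shows "card P \<le> 2 * OPT n E w + 1"
proof -
  have "inj_on (LP n E w) P"
  proof
    fix y z assume yz: "y \<in> P" "z \<in> P" "LP n E w y = LP n E w z"
    then show "y = z" using semo_populationD(4)[OF P, of y z] semo_populationD(4)[OF P, of z y]
      unfolding fle_def fit_def by force
  qed
  moreover have "LP n E w ` P \<subseteq> (\<lambda>k. real k / 2) ` {0..2 * OPT n E w}"
  proof
    fix v assume "v \<in> LP n E w ` P"
    then obtain x where x: "v = LP n E w x" by blast
    have edges: "\<forall>e\<in>E. e \<subseteq> {0..<n}" using inst unfolding wvc_instance_def by auto
    obtain k where k: "LP n E w x = real k / 2" using LP_half_integral[OF edges] by blast
    then have "k \<le> 2 * OPT n E w" using LP_le_OPT[OF inst, of x] by simp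
    then show "v \<in> (\<lambda>k. real k / 2) ` {0..2 * OPT n E w}" using x k by auto
  qed
  then have "card (LP n E w ` P) \<le> card {0..2 * OPT n E w}"
    by (meson card_image_le card_mono finite_atLeastAtMost finite_imageI le_trans)
  ultimately show ?thesis by (simp add: card_image)
qed

definition min_weight :: "nat \<Rightarrow> (nat \<Rightarrow> nat) \<Rightarrow> bool list set \<Rightarrow> nat" where
  "min_weight n w P = Min (selected_weight n w ` P)"

lemma min_weight_le: "finite P \<Longrightarrow> x \<in> P \<Longrightarrow> min_weight n w P \<le> selected_weight n w x"
  unfolding min_weight_def by auto

lemma min_weight_attained:
  assumes "finite P" "P \<noteq> {}"
  obtains m where "m \<in> P" "min_weight n w P = selected_weight n w m"
proof -
  have "min_weight n w P \<in> selected_weight n w ` P"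
    unfolding min_weight_def using assms by (intro Min_in) auto
  then show ?thesis using that by auto
qed

lemma min_weight_update_le:
  assumes P: "semo_population n E w P"
  shows "min_weight n w (semo_update n E w P x') \<le> min_weight n w P"
proof -
  have fin: "finite P" "P \<noteq> {}" using semo_populationD[OF P] by auto
  obtain m where m: "m \<in> P" "min_weight n w P = selected_weight n w m"
    using min_weight_attained[OF fin] .
  let ?Q = "insert x' {z \<in> P. \<not> fle (fit n E w x') (fit n E w z)}"
  have "min_weight n w ?Q \<le> selected_weight n w m"
  proof (cases "fle (fit n E w x') (fit n E w m)")
    case True
    moreover have "min_weight n w ?Q \<le> selected_weight n w x'" using fin by (intro min_weight_le) auto
    ultimately show ?thesis using fle_fit_selected_weight[of n E w x' m] by linarith
  next
    case False
    then show ?thesis using min_weight_le[of ?Q m] fin m(1) by simp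
  qed
  then show ?thesis using m(2) by (simp add: semo_update_def)
qed

lemma min_weight_update_improve:
  assumes P: "semo_population n E w P" and less: "selected_weight n w x' < min_weight n w P"
  shows "min_weight n w (semo_update n E w P x') \<le> selected_weight n w x'"
proof -
  have fin: "finite P" using semo_populationD[OF P] by auto
  have "\<not> fle (fit n E w y) (fit n E w x')" if "y \<in> P" for y
    using fle_fit_selected_weight[of n E w y x'] min_weight_le[OF fin that, of n w] less by linarith
  then show ?thesis unfolding semo_update_def using fin by (auto intro: min_weight_le)
qed

lemma length_mutate: "y \<in> set_pmf (mutate p x) \<Longrightarrow> length y = length x"
  by (induction x arbitrary: y) auto

lemma pmf_map_Cons: "pmf (map_pmf ((#) a) M) (c # ys) = (if a = c then pmf M ys else 0)"
proof (cases "a = c")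
  case True
  have "inj ((#) a)" by (auto simp: inj_def)
  then show ?thesis using True by (simp add: pmf_map_inj')
next
  case False
  then show ?thesis by (auto simp: pmf_eq_0_set_pmf)
qed

lemma pmf_mutate:
  assumes "0 \<le> p" "p \<le> 1" "length y = length x"
  shows "pmf (mutate p x) y = (\<Prod>k<length x. if x ! k = y ! k then 1 - p else p)"
  using assms(3)
proof (induction x arbitrary: y)
  case Nil then show ?case by simp
next
  case (Cons b bs)
  then obtain c ys where y: "y = c # ys" and len: "length ys = length bs" by (cases y) auto
  have "pmf (mutate p (b # bs)) y =
      (\<Sum>t\<in>UNIV. pmf (bernoulli_pmf p) t * pmf (map_pmf ((#) (if t then \<not> b else b)) (mutate p bs)) (c # ys))"
    by (simp add: y pmf_bind integral_measure_pmf[of UNIV] mult.commute)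
  also have "\<dots> = (if b = c then 1 - p else p) * pmf (mutate p bs) ys"
    using assms by (auto simp: UNIV_bool pmf_map_Cons)
  also have "\<dots> = (\<Prod>k<length (b # bs). if (b # bs) ! k = y ! k then 1 - p else p)"
    using Cons.IH[OF len] by (simp add: y prod.lessThan_Suc_shift del: prod.lessThan_Suc)
  finally show ?case .
qed

lemma pmf_mutate_flip:
  assumes "0 \<le> p" "p \<le> 1" "i < length x"
  shows "pmf (mutate p x) (x[i := \<not> x ! i]) = p * (1 - p) ^ (length x - 1)"
proof -
  have "pmf (mutate p x) (x[i := \<not> x ! i]) = (\<Prod>k<length x. if k = i then p else 1 - p)"
    using assms by (simp add: pmf_mutate nth_list_update) (intro prod.cong, auto)
  also have "\<dots> = p * (\<Prod>k\<in>{..<length x} - {i}. 1 - p)"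
    using assms(3) by (subst prod.remove[of _ i]) auto
  also have "\<dots> = p * (1 - p) ^ (length x - 1)" using assms(3) by simp
  finally show ?thesis .
qed

definition single_flip_prob :: "nat \<Rightarrow> real" where
  "single_flip_prob n = 1 / real n * (1 - 1 / real n) ^ (n - 1)"

lemma single_flip_prob_bounds:
  assumes "1 \<le> n"
  shows "0 \<le> single_flip_prob n" "single_flip_prob n \<le> 1"
proof -
  have p: "0 \<le> 1 / real n" "1 / real n \<le> 1" using assms by auto
  then have "0 \<le> (1 - 1 / real n) ^ (n - 1)" "(1 - 1 / real n) ^ (n - 1) \<le> 1"
    by (simp_all add: power_le_one)
  then show "0 \<le> single_flip_prob n" "single_flip_prob n \<le> 1"
    unfolding single_flip_prob_def using p mult_le_one[of "1 / real n"] by simp_all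
qed

lemma single_flip_prob_ge:
  assumes "2 \<le> n"
  shows "1 / (exp 1 * real n) \<le> single_flip_prob n"
proof -
  define m where "m = n - 1"
  have n: "n = Suc m" "0 < m" using assms unfolding m_def by auto
  have "1 - 1 / real n = real m / real n" "1 + 1 / real m = real n / real m"
    unfolding n(1) using n(2) by (simp_all add: field_simps)
  then have "(1 - 1 / real n) * (1 + 1 / real m) = 1" using n by simp
  then have "1 = (1 - 1 / real n) ^ m * (1 + 1 / real m) ^ m"
    by (metis power_mult_distrib power_one)
  also have "\<dots> \<le> (1 - 1 / real n) ^ m * exp 1"
    using exp_ge_one_plus_x_over_n_power_n[of m 1] n assms by (intro mult_left_mono) auto
  finally have "1 / exp 1 \<le> (1 - 1 / real n) ^ m" by (simp add: divide_le_eq mult.commute)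
  then have "1 / exp 1 / real n \<le> (1 - 1 / real n) ^ m / real n" by (rule divide_right_mono) simp
  then show ?thesis unfolding single_flip_prob_def m_def by simp
qed

section \<open>Drift of the minimum weight\<close>

lemma nn_integral_min_weight_update_le:
  assumes "semo_population n E w P"
  shows "(\<integral>\<^sup>+x'. ennreal (real (min_weight n w (semo_update n E w P x'))) \<partial>measure_pmf M)
         \<le> ennreal (real (min_weight n w P))"
proof -
  have "(\<integral>\<^sup>+x'. ennreal (real (min_weight n w (semo_update n E w P x'))) \<partial>measure_pmf M)
      \<le> (\<integral>\<^sup>+x'. ennreal (real (min_weight n w P)) \<partial>measure_pmf M)"
    using min_weight_update_le[OF assms] by (intro nn_integral_mono) simp
  then show ?thesis by (simp add: measure_pmf.emeasure_space_1)
qed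

text \<open>Deselecting exactly one selected vertex i of a minimum-weight member (probability
  single_flip_prob n for every i) produces a point cheaper than the whole population, which is
  therefore accepted and lowers the minimum weight by w i.\<close>

lemma nn_integral_min_weight_mutate_minimizer:
  assumes inst: "wvc_instance n E w" and n: "1 \<le> n" and P: "semo_population n E w P"
    and m: "m \<in> P" "min_weight n w P = selected_weight n w m"
  shows "(\<integral>\<^sup>+x'. ennreal (real (min_weight n w (semo_update n E w P x'))) \<partial>measure_pmf (mutate (1 / real n) m))
         \<le> ennreal (real (min_weight n w P) * (1 - single_flip_prob n))"
proof -
  define M where "M = mutate (1 / real n) m"
  define \<Phi> where "\<Phi> = real (min_weight n w P)"
  define h where "h x' = real (min_weight n w (semo_update n E w P x'))" for x'
  define L where "L = {y :: bool list. length y = n}"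
  define S where "S = {i. i < n \<and> m ! i}"
  define g where "g i = m[i := False]" for i
  have len: "length m = n" using semo_populationD(3)[OF P m(1)] .
  have L: "finite L" "set_pmf M \<subseteq> L"
    using finite_lists_length_eq[of "UNIV :: bool set" n] length_mutate len
    unfolding L_def M_def by auto
  have g: "inj_on g S" "g ` S \<subseteq> L"
  proof -
    have "g i ! i \<noteq> g j ! i" if "i \<in> S" "j \<in> S" "i \<noteq> j" for i j
      using that len unfolding S_def g_def by simp
    then show "inj_on g S" by (metis inj_onI)
    show "g ` S \<subseteq> L" using len unfolding g_def L_def by auto
  qed
  have le: "h a \<le> \<Phi>" for a
    unfolding h_def \<Phi>_def using min_weight_update_le[OF P] by simp
  have improve: "h (g i) \<le> \<Phi> - real (w i)" if "i \<in> S" for i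
  proof -
    have deselect: "selected_weight n w (g i) + w i = selected_weight n w m"
      using selected_weight_deselect[OF len] that unfolding S_def g_def by blast
    moreover have "0 < w i" using inst that unfolding wvc_instance_def S_def by auto
    ultimately have "min_weight n w (semo_update n E w P (g i)) \<le> selected_weight n w (g i)"
      using m(2) by (intro min_weight_update_improve[OF P]) linarith
    then show ?thesis unfolding h_def \<Phi>_def using deselect m(2) by linarith
  qed
  have flip: "pmf M (g i) = single_flip_prob n" if "i \<in> S" for i
    using pmf_mutate_flip[of "1 / real n" i m] n that len
    unfolding M_def g_def S_def single_flip_prob_def by simp
  have "(\<Sum>i\<in>S. real (w i) * pmf M (g i)) = single_flip_prob n * \<Phi>"
    unfolding \<Phi>_def m(2) selected_weight_def S_def using flip[unfolded S_def]
    by (simp add: sum_distrib_left sum_distrib_right mult.commute)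
  then have "(\<Sum>a\<in>L. h a * pmf M a) \<le> \<Phi> * (1 - single_flip_prob n)"
    using sum_pmf_improvement_le[OF L g, of h \<Phi> "\<lambda>i. real (w i)"] le improve by (simp add: algebra_simps)
  moreover have "(\<integral>\<^sup>+x'. ennreal (h x') \<partial>measure_pmf M) = ennreal (\<Sum>a\<in>L. h a * pmf M a)"
    using L by (intro nn_integral_measure_pmf_real_sum) (auto simp: h_def)
  ultimately show ?thesis unfolding M_def h_def \<Phi>_def by (simp add: ennreal_leI)
qed

definition drift_rate :: "nat \<Rightarrow> nat set set \<Rightarrow> (nat \<Rightarrow> nat) \<Rightarrow> real" where
  "drift_rate n E w = single_flip_prob n / real (2 * OPT n E w + 1)"

lemma drift_rate_bounds:
  assumes "1 \<le> n"
  shows "0 \<le> drift_rate n E w" "drift_rate n E w \<le> 1"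
  using single_flip_prob_bounds[OF assms] unfolding drift_rate_def
  by (auto simp: divide_le_eq_1)

lemma inverse_drift_rate_le:
  assumes inst: "wvc_instance n E w" and ne: "E \<noteq> {}"
  shows "0 < drift_rate n E w" "1 / drift_rate n E w \<le> 9 * (real (OPT n E w) * real n)"
proof -
  have n: "2 \<le> n" using wvc_instance_two_le[OF inst ne] .
  define q where "q = single_flip_prob n"
  define a where "a = real (2 * OPT n E w + 1)"
  have en: "0 < exp 1 * real n" using n by simp
  have q1: "1 \<le> q * (exp 1 * real n)" using single_flip_prob_ge[OF n] en unfolding q_def by (simp add: divide_le_eq)
  have q0: "0 < q" using single_flip_prob_ge[OF n] en unfolding q_def by (smt (verit) divide_pos_pos)
  then show "0 < drift_rate n E w" unfolding drift_rate_def q_def by simp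
  have "a \<le> a * (exp 1 * real n) * q" using mult_left_mono[OF q1, of a] by (simp add: a_def ac_simps)
  then have "1 / drift_rate n E w \<le> a * (exp 1 * real n)"
    using q0 unfolding drift_rate_def q_def[symmetric] a_def[symmetric] by (simp add: pos_divide_le_eq)
  also have "\<dots> \<le> (3 * real (OPT n E w)) * (3 * real n)"
    using OPT_pos[OF inst ne] exp_le unfolding a_def by (intro mult_mono) auto
  finally show "1 / drift_rate n E w \<le> 9 * (real (OPT n E w) * real n)" by simp
qed

text \<open>A minimum-weight member is chosen for mutation with probability
  1 / card P \<ge> 1 / (2 OPT + 1).\<close>

lemma nn_integral_min_weight_stopped_step:
  assumes inst: "wvc_instance n E w" and ne: "E \<noteq> {}" and P: "semo_population n E w P"
  shows "(\<integral>\<^sup>+P'. ennreal (real (min_weight n w P')) \<partial>measure_pmf (stopped_step n E w P))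
         \<le> ennreal ((1 - drift_rate n E w) * real (min_weight n w P))"
proof (cases "zeros n \<in> P")
  case True
  then have "min_weight n w P = 0"
    using min_weight_le[OF semo_populationD(1)[OF P] True, of n w] by simp
  then show ?thesis using True by (simp add: stopped_step_def)
next
  case False
  have n: "1 \<le> n" using wvc_instance_two_le[OF inst ne] by simp
  have fin: "finite P" "P \<noteq> {}" using semo_populationD[OF P] by auto
  obtain m where m: "m \<in> P" "min_weight n w P = selected_weight n w m"
    using min_weight_attained[OF fin] .
  define \<Phi> where "\<Phi> = real (min_weight n w P)"
  define q where "q = single_flip_prob n"
  have q: "0 \<le> q" "q \<le> 1" using single_flip_prob_bounds[OF n] unfolding q_def by auto
  have "(\<integral>\<^sup>+P'. ennreal (real (min_weight n w P')) \<partial>measure_pmf (stopped_step n E w P))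
      = (\<integral>\<^sup>+x. (\<integral>\<^sup>+x'. ennreal (real (min_weight n w (semo_update n E w P x')))
            \<partial>measure_pmf (mutate (1 / real n) x)) \<partial>measure_pmf (pmf_of_set P))"
    using False by (simp add: stopped_step_def semo_step_eq)
  also have "\<dots> \<le> ennreal (\<Phi> - q * \<Phi> / real (card P))"
  proof (rule nn_integral_pmf_of_set_improvement_le[OF fin(1) m(1)])
    show "0 \<le> q * \<Phi>" "q * \<Phi> \<le> \<Phi>"
      using q mult_left_le_one_le[of \<Phi> q] unfolding \<Phi>_def by auto
  next
    fix x
    show "(\<integral>\<^sup>+x'. ennreal (real (min_weight n w (semo_update n E w P x'))) \<partial>measure_pmf (mutate (1 / real n) x))
        \<le> ennreal \<Phi>"
      unfolding \<Phi>_def by (rule nn_integral_min_weight_update_le[OF P])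
  next
    have "\<Phi> * (1 - q) = \<Phi> - q * \<Phi>" by (simp add: algebra_simps)
    then show "(\<integral>\<^sup>+x'. ennreal (real (min_weight n w (semo_update n E w P x'))) \<partial>measure_pmf (mutate (1 / real n) m))
        \<le> ennreal (\<Phi> - q * \<Phi>)"
      using nn_integral_min_weight_mutate_minimizer[OF inst n P m] unfolding \<Phi>_def q_def by simp
  qed
  also have "\<dots> \<le> ennreal ((1 - drift_rate n E w) * \<Phi>)"
  proof (rule ennreal_leI)
    have "0 < card P" using fin card_gt_0_iff by blast
    moreover have "card P \<le> 2 * OPT n E w + 1" using card_semo_population_le[OF inst P] .
    ultimately have "q / real (2 * OPT n E w + 1) \<le> q / real (card P)"
      using q by (intro divide_left_mono) auto
    then have "q / real (2 * OPT n E w + 1) * \<Phi> \<le> q / real (card P) * \<Phi>"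
      by (rule mult_right_mono) (simp add: \<Phi>_def)
    then show "\<Phi> - q * \<Phi> / real (card P) \<le> (1 - drift_rate n E w) * \<Phi>"
      unfolding drift_rate_def q_def[symmetric] by (simp add: algebra_simps)
  qed
  finally show ?thesis unfolding \<Phi>_def .
qed

lemma semo_population_stopped_step:
  assumes P: "semo_population n E w P" and P': "P' \<in> set_pmf (stopped_step n E w P)"
  shows "semo_population n E w P'"
proof (cases "zeros n \<in> P")
  case True then show ?thesis using P P' by (simp add: stopped_step_def)
next
  case False
  then obtain x x' where x: "x \<in> P" "x' \<in> set_pmf (mutate (1 / real n) x)"
    and P': "P' = semo_update n E w P x'"
    using P' semo_populationD(1,2)[OF P] by (auto simp: stopped_step_def semo_step_eq)
  have "length x' = n" using length_mutate[OF x(2)] semo_populationD(3)[OF P x(1)] by simp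
  then show ?thesis unfolding P' by (rule semo_population_update[OF P])
qed

lemma semo_population_run: "P \<in> set_pmf (semo_run n E w t) \<Longrightarrow> semo_population n E w P"
proof (induction t arbitrary: P)
  case 0
  have "finite {x :: bool list. length x = n}"
    using finite_lists_length_eq[of "UNIV :: bool set" n] by simp
  moreover have "{x :: bool list. length x = n} \<noteq> {}" by (metis empty_iff length_replicate mem_Collect_eq)
  ultimately have "set_pmf (init_pmf n) = {x. length x = n}" unfolding init_pmf_def by simp
  with 0 obtain x where "P = {x}" "length x = n" by auto
  then show ?case unfolding semo_population_def by simp
next
  case (Suc t)
  then obtain Q where "Q \<in> set_pmf (semo_run n E w t)" "P \<in> set_pmf (stopped_step n E w Q)" by auto
  then show ?case using Suc.IH semo_population_stopped_step by blast
qed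

lemma nn_integral_min_weight_run:
  assumes inst: "wvc_instance n E w" and ne: "E \<noteq> {}"
  shows "(\<integral>\<^sup>+P. ennreal (real (min_weight n w P)) \<partial>measure_pmf (semo_run n E w t))
          \<le> ennreal ((1 - drift_rate n E w) ^ t * real (n * Wmax n w))"
proof (induction t)
  case 0
  have "min_weight n w {x} \<le> n * Wmax n w" for x
    unfolding min_weight_def using selected_weight_le by simp
  then have "(\<integral>\<^sup>+x. ennreal (real (min_weight n w {x})) \<partial>measure_pmf (init_pmf n))
      \<le> (\<integral>\<^sup>+x. ennreal (real (n * Wmax n w)) \<partial>measure_pmf (init_pmf n))"
    by (intro nn_integral_mono ennreal_leI) (simp only: of_nat_le_iff)
  then show ?case by (simp add: measure_pmf.emeasure_space_1)
next
  case (Suc t)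
  define r where "r = 1 - drift_rate n E w"
  have r: "0 \<le> r" using drift_rate_bounds(2)[of n] wvc_instance_two_le[OF inst ne] unfolding r_def by simp
  have "(\<integral>\<^sup>+P. ennreal (real (min_weight n w P)) \<partial>measure_pmf (semo_run n E w (Suc t)))
      = (\<integral>\<^sup>+Q. (\<integral>\<^sup>+P. ennreal (real (min_weight n w P)) \<partial>measure_pmf (stopped_step n E w Q))
           \<partial>measure_pmf (semo_run n E w t))"
    by simp
  also have "\<dots> \<le> (\<integral>\<^sup>+Q. ennreal r * ennreal (real (min_weight n w Q)) \<partial>measure_pmf (semo_run n E w t))"
  proof (intro nn_integral_mono_AE AE_pmfI)
    fix Q assume "Q \<in> set_pmf (semo_run n E w t)"
    from nn_integral_min_weight_stopped_step[OF inst ne semo_population_run[OF this]] r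
    show "(\<integral>\<^sup>+P. ennreal (real (min_weight n w P)) \<partial>measure_pmf (stopped_step n E w Q))
          \<le> ennreal r * ennreal (real (min_weight n w Q))" by (simp add: r_def ennreal_mult)
  qed
  also have "\<dots> = ennreal r * (\<integral>\<^sup>+Q. ennreal (real (min_weight n w Q)) \<partial>measure_pmf (semo_run n E w t))"
    by (rule nn_integral_cmult) simp
  also have "\<dots> \<le> ennreal r * ennreal (r ^ t * real (n * Wmax n w))"
    using Suc.IH unfolding r_def by (intro mult_left_mono) simp_all
  also have "\<dots> = ennreal (r ^ Suc t * real (n * Wmax n w))"
    using r by (simp add: ennreal_mult[symmetric] mult.assoc)
  finally show ?case unfolding r_def .
qed

text \<open>Markov's inequality: as all weights are positive, a population without 0^n has
  minimum weight at least 1.\<close>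

lemma prob_zeros_not_found_le:
  assumes inst: "wvc_instance n E w" and ne: "E \<noteq> {}"
  shows "measure_pmf.prob (semo_run n E w t) {P. zeros n \<notin> P}
         \<le> (1 - drift_rate n E w) ^ t * real (n * Wmax n w)"
proof -
  have pos: "\<forall>i<n. 0 < w i" using inst unfolding wvc_instance_def by auto
  have "emeasure (measure_pmf (semo_run n E w t)) {P. zeros n \<notin> P}
      = (\<integral>\<^sup>+P. indicator {P. zeros n \<notin> P} P \<partial>measure_pmf (semo_run n E w t))"
    by simp
  also have "\<dots> \<le> (\<integral>\<^sup>+P. ennreal (real (min_weight n w P)) \<partial>measure_pmf (semo_run n E w t))"
  proof (intro nn_integral_mono_AE AE_pmfI)
    fix P assume "P \<in> set_pmf (semo_run n E w t)"
    then have P: "semo_population n E w P" by (rule semo_population_run)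
    show "indicator {P. zeros n \<notin> P} P \<le> ennreal (real (min_weight n w P))"
    proof (cases "zeros n \<in> P")
      case False
      obtain m where m: "m \<in> P" "min_weight n w P = selected_weight n w m"
        using min_weight_attained semo_populationD(1,2)[OF P] by metis
      have "selected_weight n w m \<noteq> 0"
        using selected_weight_eq_0_iff[OF pos semo_populationD(3)[OF P m(1)]] m(1) False by auto
      then show ?thesis using False m(2) by simp
    qed simp
  qed
  also have "\<dots> \<le> ennreal ((1 - drift_rate n E w) ^ t * real (n * Wmax n w))"
    by (rule nn_integral_min_weight_run[OF inst ne])
  finally show ?thesis
    using drift_rate_bounds(2)[of n] wvc_instance_two_le[OF inst ne]
    by (simp add: measure_pmf.emeasure_eq_measure ennreal_le_iff)
qed

lemma expected_time_zeros_le: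
  assumes inst: "wvc_instance n E w" and ne: "E \<noteq> {}"
  shows "expected_time_zeros n E w
         \<le> ennreal ((ln (real (n * Wmax n w)) + 1) / drift_rate n E w + 1)"
  unfolding expected_time_zeros_def
proof (rule suminf_le_multiplicative_drift)
  have n: "2 \<le> n" using wvc_instance_two_le[OF inst ne] .
  show "0 < drift_rate n E w" using inverse_drift_rate_le[OF inst ne] by simp
  show "drift_rate n E w \<le> 1" using drift_rate_bounds n by simp
  show "1 \<le> real (n * Wmax n w)"
    using Wmax_pos[OF inst] n by (simp add: Suc_le_eq[symmetric] one_le_mult_iff del: of_nat_mult)
  show "measure_pmf.prob (semo_run n E w t) {P. zeros n \<notin> P}
      \<le> (1 - drift_rate n E w) ^ t * real (n * Wmax n w)" for t
    by (rule prob_zeros_not_found_le[OF inst ne])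
qed simp

lemma expected_time_zeros_le_OPT:
  assumes inst: "wvc_instance n E w" and ne: "E \<noteq> {}"
  shows "expected_time_zeros n E w
         \<le> ennreal (29 * real (OPT n E w) * real n * (ln (real (Wmax n w)) + ln (real n)))"
proof -
  define X where "X = real (OPT n E w) * real n"
  define L where "L = ln (real (Wmax n w)) + ln (real n)"
  have n: "2 \<le> n" using wvc_instance_two_le[OF inst ne] .
  have W: "1 \<le> real (Wmax n w)" using Wmax_pos[OF inst] n by simp
  have X: "2 \<le> X"
    using OPT_pos[OF inst ne] n mult_mono[of 1 "real (OPT n E w)" 2 "real n"] unfolding X_def by simp
  have L: "1/2 \<le> L"
  proof -
    have "ln (1/2 :: real) \<le> 1/2 - 1" by (rule ln_le_minus_one) simp
    then have "1/2 \<le> ln (2 :: real)" by (simp add: ln_div)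
    also have "\<dots> \<le> ln (real n)" using n by simp
    finally show ?thesis using ln_ge_zero[OF W] unfolding L_def by simp
  qed
  have "ln (real (n * Wmax n w)) = L"
    using W n unfolding L_def by (simp add: ln_mult)
  then have "expected_time_zeros n E w \<le> ennreal ((L + 1) / drift_rate n E w + 1)"
    using expected_time_zeros_le[OF inst ne] by simp
  also have "\<dots> \<le> ennreal (29 * X * L)"
  proof (rule ennreal_leI)
    have "(L + 1) / drift_rate n E w \<le> (L + 1) * (9 * X)"
      using mult_left_mono[OF inverse_drift_rate_le(2)[OF inst ne], of "L + 1"] L unfolding X_def by simp
    moreover have "1 \<le> X * L" "X \<le> 2 * (X * L)"
      using mult_mono[OF X L] mult_left_mono[OF L, of X] X L by auto
    ultimately show "(L + 1) / drift_rate n E w + 1 \<le> 29 * X * L" by (simp add: algebra_simps)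
  qed
  finally show ?thesis unfolding X_def L_def by (simp only: mult.assoc)
qed

theorem lemma4:
  "\<exists>C::real. C > 0 \<and>
     (\<forall>n E w. wvc_instance n E w \<and> E \<noteq> {} \<longrightarrow>
        expected_time_zeros n E w
          \<le> ennreal (C * real (OPT n E w) * real n * (ln (real (Wmax n w)) + ln (real n))))"
  using expected_time_zeros_le_OPT by (intro exI[of _ 29]) auto

end
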